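(* Let $\ell$ be a positive integer. If a partial $(n,k,t)_\lambda$-system has a nondeficient $\ell$-presequencing, then it has a cyclically $\ell$-good sequencing.
   Context: For positive integers $n,k,t,\lambda$ with $n \geq k > t \geq 2$, a partial $(n,k,t)_\lambda$-system is a pair $(X,\mathcal{B})$ where $X$ is an $n$-set of vertices and $\mathcal{B}$ is a collection of $k$-subsets of $X$ (blocks) such that each $t$-subset of $X$ is contained in at most $\lambda$ blocks. An independent set is a subset of $X$ containing no block. A sequencing is a bijection $\varphi:\mathbb{Z}_n\to X$; a set $S$ is cyclically consecutive if $S=\{\varphi(i),\ldots,\varphi(i+|S|-1)\}$ for some $i\in\mathbb{Z}_n$ (addition mod $n$); the sequencing is cyclically $\ell$-good if every set of $\ell$ cyclically consecutive vertices is independent. An $\ell$-buffered set is a triple $(S,S^{L},S^{R})$ with $S^{L},S^{R}\subseteq S$ (buffers) such that: (B1) if $|S|\le \ell-2$ then $S^{L}=S^{R}=S$; (B2) if $\ell-1\le |S|\le 2\ell-2$ then $|S^{L}|=|S^{R}|=\ell-1$ and $S^{L}\cup S^{R}=S$; (B3) if $|S|\ge 2\ell-1$ then $|S^{L}|=|S^{R}|=\ell-1$ and $S^{L}\cap S^{R}=\emptyset$. It is deficient if $|S|\le \ell-2$ and nondeficient otherwise. An $\ell$-presequencing of $(X,\mathcal{B})$ is a tuple $(X_0,\ldots,X_{s-1})$ of $\ell$-buffered sets (classes) whose underlying sets partition $X$, such that (P1) each $X_i$ is independent, and (P2) for each $i\in\mathbb{Z}_s$, $X_i^{R}\cup X_{i+1}^{L}$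 is independent (indices mod $s$). It is nondeficient if every class is nondeficient. *)

theory Defs
  imports Main "HOL-Library.Multiset"
begin

definition partial_system ::
  "nat \<Rightarrow> nat \<Rightarrow> nat \<Rightarrow> nat \<Rightarrow> 'a set \<Rightarrow> 'a set multiset \<Rightarrow> bool" where
  "partial_system n k t lam X B \<longleftrightarrow>
     finite X \<and> card X = n \<and> 0 < lam \<and> n \<ge> k \<and> k > t \<and> t \<ge> 2 \<and>
     (\<forall>b \<in># B. b \<subseteq> X \<and> card b = k) \<and>
     (\<forall>T. T \<subseteq> X \<longrightarrow> card T = t \<longrightarrow> size (filter_mset (\<lambda>b. T \<subseteq> b) B) \<le> lam)"

definition independent :: "'a set \<Rightarrow> 'a set multiset \<Rightarrow> 'a set \<Rightarrow> bool" where
  "independent X B S \<longleftrightarrow> S \<subseteq> X \<and> (\<forall>b \<in># B. \<not> b \<subseteq> S)"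

text \<open>A sequencing: a bijection from Z_n (represented as {0..<n}) onto X.\<close>
definition sequencing :: "nat \<Rightarrow> 'a set \<Rightarrow> (nat \<Rightarrow> 'a) \<Rightarrow> bool" where
  "sequencing n X \<phi> \<longleftrightarrow> bij_betw \<phi> {0..<n} X"

definition cyclically_consecutive :: "nat \<Rightarrow> (nat \<Rightarrow> 'a) \<Rightarrow> 'a set \<Rightarrow> bool" where
  "cyclically_consecutive n \<phi> S \<longleftrightarrow>
     (\<exists>i<n. S = {\<phi> ((i + j) mod n) | j. j < card S})"

definition cyclically_good ::
  "nat \<Rightarrow> nat \<Rightarrow> 'a set \<Rightarrow> 'a set multiset \<Rightarrow> (nat \<Rightarrow> 'a) \<Rightarrow> bool" where
  "cyclically_good l n X B \<phi> \<longleftrightarrow>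
     (\<forall>S. S \<subseteq> X \<longrightarrow> card S = l \<longrightarrow> cyclically_consecutive n \<phi> S \<longrightarrow> independent X B S)"

text \<open>An l-buffered set (S, S^L, S^R); nat subtraction avoided in the size bounds.\<close>
definition buffered :: "nat \<Rightarrow> 'a set \<times> 'a set \<times> 'a set \<Rightarrow> bool" where
  "buffered l C \<longleftrightarrow> (case C of (S, SL, SR) \<Rightarrow>
     SL \<subseteq> S \<and> SR \<subseteq> S \<and>
     (card S + 2 \<le> l \<longrightarrow> SL = S \<and> SR = S) \<and>
     (l \<le> card S + 1 \<and> card S + 2 \<le> 2 * l \<longrightarrow>
        card SL = l - 1 \<and> card SR = l - 1 \<and> SL \<union> SR = S) \<and>
     (2 * l \<le> card S + 1 \<longrightarrow>
        card SL = l - 1 \<and> card SR = l - 1 \<and> SL \<inter> SR = {}))"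

definition deficient :: "nat \<Rightarrow> 'a set \<times> 'a set \<times> 'a set \<Rightarrow> bool" where
  "deficient l C \<longleftrightarrow> card (fst C) + 2 \<le> l"

definition presequencing ::
  "nat \<Rightarrow> 'a set \<Rightarrow> 'a set multiset \<Rightarrow> ('a set \<times> 'a set \<times> 'a set) list \<Rightarrow> bool" where
  "presequencing l X B P \<longleftrightarrow>
     P \<noteq> [] \<and>
     (\<forall>i < length P. buffered l (P ! i)) \<and>
     (\<forall>i < length P. fst (P ! i) \<noteq> {}) \<and>
     (\<forall>i < length P. \<forall>j < length P. i \<noteq> j \<longrightarrow> fst (P ! i) \<inter> fst (P ! j) = {}) \<and>
     (\<Union>i < length P. fst (P ! i)) = X \<and>
     (\<forall>i < length P. independent X B (fst (P ! i))) \<and>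
     (\<forall>i < length P. independent X B
         (snd (snd (P ! i)) \<union> fst (snd (P ! ((i + 1) mod length P)))))"

definition nondeficient_presequencing :: "nat \<Rightarrow> ('a set \<times> 'a set \<times> 'a set) list \<Rightarrow> bool" where
  "nondeficient_presequencing l P \<longleftrightarrow> (\<forall>i < length P. \<not> deficient l (P ! i))"

end

theory Submission
  imports Defs
begin

(* List every class with its left buffer first and its right buffer last; for a nondeficient
   class both buffers have l - 1 elements and either cover the class or are disjoint, so this
   is possible. Concatenate these lists and read the result cyclically. A window of l
   consecutive vertices then either lies inside one class, which is independent by (P1), or
   consists of at most l - 1 trailing vertices of one class and at most l - 1 leading vertices
   of the next, i.e. lies in the right buffer of a class and the left buffer of its successor,
   which is independent by (P2). *)

lemma independent_subset: "independent X B C \<Longrightarrow> A \<subseteq> C \<Longrightarrow> independent X B A"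
  unfolding independent_def by blast

definition buffer_order :: "nat \<Rightarrow> 'a set \<times> 'a set \<times> 'a set \<Rightarrow> 'a list \<Rightarrow> bool" where
  "buffer_order l C xs \<longleftrightarrow> distinct xs \<and> set xs = fst C \<and>
     set (take (l - 1) xs) = fst (snd C) \<and> set (drop (length xs - (l - 1)) xs) = snd (snd C)"

lemma buffer_order_exists:
  assumes buf: "buffered l (S, L, R)" and "finite S" and nondeficient: "l \<le> card S + 1"
  shows "\<exists>xs. buffer_order l (S, L, R) xs"
proof -
  have "L \<subseteq> S" "R \<subseteq> S" and card_L: "card L = l - 1" and card_R: "card R = l - 1"
    and cover_or_disjoint: "L \<union> R = S \<or> L \<inter> R = {}"
    using buf nondeficient unfolding buffered_def by (auto split: if_splits)
  then have "finite L" "finite R" using \<open>finite S\<close> finite_subset by auto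
  obtain a c d e where "distinct a" "set a = L - R" "distinct c" "set c = L \<inter> R"
    "distinct d" "set d = S - L - R" "distinct e" "set e = R - L"
    using finite_distinct_list \<open>finite S\<close> \<open>finite L\<close> \<open>finite R\<close>
    by (metis finite_Diff finite_Int)
  moreover have "length a + length c = l - 1" "length c + length e = l - 1"
    using calculation card_L card_R card_Int_Diff[OF \<open>finite L\<close>, of R]
      card_Int_Diff[OF \<open>finite R\<close>, of L]
    by (auto simp: Int_commute dest!: distinct_card)
  \<comment> \<open>The first \<open>l - 1\<close> entries of \<open>a @ c @ d @ e\<close> list \<open>L\<close>; as (B2) makes \<open>d\<close> and
    (B3) makes \<open>c\<close> empty, the last \<open>l - 1\<close> entries list \<open>R\<close>.\<close>
  moreover have "d = [] \<or> c = []"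
  proof -
    have "set d = {} \<or> set c = {}" using cover_or_disjoint calculation by auto
    then show ?thesis by simp
  qed
  ultimately have "buffer_order l (S, L, R) (a @ c @ d @ e)"
    using \<open>L \<subseteq> S\<close> \<open>R \<subseteq> S\<close> unfolding buffer_order_def
    by (auto simp flip: \<open>length a + length c = l - 1\<close> \<open>length c + length e = l - 1\<close>)
  then show ?thesis ..
qed

lemma window_of_concat:
  fixes Q :: "'a set \<Rightarrow> bool"
  assumes subset_closed: "\<And>A C. Q C \<Longrightarrow> A \<subseteq> C \<Longrightarrow> Q A"
    and "Q {}"
    and blocks: "\<forall>b\<in>set bs. l - 1 \<le> length b \<and> Q (set b)"
    and seams: "\<forall>i. Suc i < length bs \<longrightarrow>
       Q (set (drop (length (bs ! i) - (l - 1)) (bs ! i)) \<union> set (take (l - 1) (bs ! Suc i)))"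
  shows "Q (set (take l (drop p (concat bs))))"
  using blocks seams
proof (induction bs arbitrary: p)
  case Nil
  then show ?case using \<open>Q {}\<close> by simp
next
  case (Cons b bs)
  have Q_b: "Q (set b)" and "l - 1 \<le> length b" using Cons.prems(1) by auto
  consider (beyond) "length b \<le> p" | (inside) "p + l \<le> length b"
    | (across) "p < length b" "length b < p + l" by linarith
  then show ?case
  proof cases
    case beyond
    have "Q (set (take l (drop (p - length b) (concat bs))))"
      using Cons.prems by (intro Cons.IH) (simp, metis Suc_less_eq length_Cons nth_Cons_Suc)
    then show ?thesis using beyond by simp
  next
    case inside
    then have "take l (drop p (concat (b # bs))) = take l (drop p b)" by simp
    then show ?thesis
      using subset_closed[OF Q_b] by (metis order_trans set_drop_subset set_take_subset)
  next
    case across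
    define c where "c = l - (length b - p)"
    have window: "take l (drop p (concat (b # bs))) = drop p b @ take c (concat bs)"
      using across by (simp add: c_def)
    show ?thesis
    proof (cases bs)
      case Nil
      then show ?thesis using window subset_closed[OF Q_b] by (simp add: set_drop_subset)
    next
      case (Cons b' bs')
      have "c \<le> l - 1" "l - 1 \<le> length b'"
        using across Cons.prems(1) \<open>bs = b' # bs'\<close> by (auto simp: c_def)
      then have prefix: "set (take c (concat bs)) \<subseteq> set (take (l - 1) b')"
        using \<open>bs = b' # bs'\<close> by (simp add: set_take_subset_set_take)
      have suffix: "set (drop p b) \<subseteq> set (drop (length b - (l - 1)) b)"
        using across by (intro set_drop_subset_set_drop) linarith
      have "Q (set (drop (length b - (l - 1)) b) \<union> set (take (l - 1) b'))"
        using Cons.prems(2)[rule_format, of 0] \<open>bs = b' # bs'\<close> by simp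
      from subset_closed[OF this Un_mono[OF suffix prefix]] show ?thesis
        unfolding window by simp
    qed
  qed
qed

lemma nth_append_self:
  assumes "p < 2 * length xs"
  shows "(xs @ xs) ! p = xs ! (p mod length xs)"
  using assms by (auto simp: nth_append mod_if)

lemma window_of_cyclic_concat:
  fixes Q :: "'a set \<Rightarrow> bool"
  assumes subset_closed: "\<And>A C. Q C \<Longrightarrow> A \<subseteq> C \<Longrightarrow> Q A"
    and "Q {}"
    and blocks: "\<forall>b\<in>set bs. l - 1 \<le> length b \<and> Q (set b)"
    and seams: "\<forall>i<length bs. Q (set (drop (length (bs ! i) - (l - 1)) (bs ! i)) \<union>
       set (take (l - 1) (bs ! ((i + 1) mod length bs))))"
  shows "Q (set (take l (drop p (concat bs @ concat bs))))"
proof -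
  have bs_bs: "(bs @ bs) ! i = bs ! (i mod length bs)" if "i < length (bs @ bs)" for i
    using that by (intro nth_append_self) simp
  have "Q (set (take l (drop p (concat (bs @ bs)))))"
  proof (rule window_of_concat[where Q = Q and l = l, OF subset_closed \<open>Q {}\<close>])
    show "\<forall>b\<in>set (bs @ bs). l - 1 \<le> length b \<and> Q (set b)" using blocks by simp
    show "\<forall>i. Suc i < length (bs @ bs) \<longrightarrow>
        Q (set (drop (length ((bs @ bs) ! i) - (l - 1)) ((bs @ bs) ! i)) \<union>
           set (take (l - 1) ((bs @ bs) ! Suc i)))"
    proof (intro allI impI)
      fix i assume "Suc i < length (bs @ bs)"
      then have "i mod length bs < length bs" by (cases bs) auto
      with seams have "Q (set (drop (length (bs ! (i mod length bs)) - (l - 1))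
            (bs ! (i mod length bs))) \<union>
          set (take (l - 1) (bs ! ((i mod length bs + 1) mod length bs))))"
        by blast
      moreover have "(i mod length bs + 1) mod length bs = Suc i mod length bs"
        by (simp add: mod_Suc_eq)
      ultimately show "Q (set (drop (length ((bs @ bs) ! i) - (l - 1)) ((bs @ bs) ! i)) \<union>
           set (take (l - 1) ((bs @ bs) ! Suc i)))"
        using bs_bs[of i] bs_bs[of "Suc i"] \<open>Suc i < length (bs @ bs)\<close> by (simp only: Suc_lessD)
    qed
  qed
  then show ?thesis by simp
qed

lemma cyclic_window_eq_set_take_drop:
  assumes "i < length xs" "m \<le> length xs"
  shows "{xs ! ((i + j) mod length xs) | j. j < m} = set (take m (drop i (xs @ xs)))"
proof -
  define window where "window = take m (drop i (xs @ xs))"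
  have "window ! j = xs ! ((i + j) mod length xs)" if "j < m" for j
  proof -
    have "window ! j = (xs @ xs) ! (i + j)"
      using that assms by (simp add: window_def nth_take nth_drop del: drop_append)
    also have "\<dots> = xs ! ((i + j) mod length xs)"
      using that assms by (intro nth_append_self) simp
    finally show ?thesis .
  qed
  moreover have "length window = m" using assms by (simp add: window_def)
  ultimately show ?thesis unfolding window_def[symmetric] by (force simp: set_conv_nth)
qed

lemma sequencing_nth: "distinct xs \<Longrightarrow> sequencing (length xs) (set xs) ((!) xs)"
  unfolding sequencing_def by (simp add: bij_betw_nth atLeast0LessThan)

lemma cyclically_good_nth:
  assumes "distinct xs" "set xs = X"
    and windows: "\<And>i. i < length xs \<Longrightarrow> independent X B (set (take l (drop i (xs @ xs))))"
  shows "cyclically_good l (length xs) X B ((!) xs)"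
  unfolding cyclically_good_def cyclically_consecutive_def
proof (intro allI impI)
  fix S assume "S \<subseteq> X" "card S = l"
    and "\<exists>i<length xs. S = {xs ! ((i + j) mod length xs) | j. j < card S}"
  then obtain i where "i < length xs" and S: "S = {xs ! ((i + j) mod length xs) | j. j < l}"
    by auto
  have "l \<le> length xs"
    using \<open>S \<subseteq> X\<close> \<open>card S = l\<close> assms(1,2) by (metis card_mono distinct_card finite_set)
  then show "independent X B S"
    using S windows[OF \<open>i < length xs\<close>] cyclic_window_eq_set_take_drop[OF \<open>i < length xs\<close>] by simp
qed

lemma presequencing_buffer_orders:
  assumes "presequencing l X B P" "nondeficient_presequencing l P" "finite X"
  obtains bs where "length bs = length P" "\<And>i. i < length P \<Longrightarrow> buffer_order l (P ! i) (bs ! i)"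
proof -
  have "\<exists>xs. buffer_order l (P ! i) xs" if "i < length P" for i
  proof -
    obtain S L R where P_i: "P ! i = (S, L, R)" by (cases "P ! i")
    have "buffered l (S, L, R)" "fst (P ! i) \<subseteq> X"
      using assms(1) that P_i unfolding presequencing_def by auto
    moreover have "l \<le> card S + 1"
      using assms(2) that P_i unfolding nondeficient_presequencing_def deficient_def by force
    ultimately show ?thesis
      using buffer_order_exists[of l S L R] finite_subset[of S X] \<open>finite X\<close> P_i by simp
  qed
  then obtain f where "\<And>i. i < length P \<Longrightarrow> buffer_order l (P ! i) (f i)" by metis
  then show ?thesis using that[of "map f [0..<length P]"] by simp
qed

lemma concat_buffer_orders_enumerate:
  assumes "presequencing l X B P" "length bs = length P"
    and "\<And>i. i < length P \<Longrightarrow> buffer_order l (P ! i) (bs ! i)"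
  shows "distinct (concat bs)" "set (concat bs) = X"
proof -
  have classes: "set (bs ! i) = fst (P ! i)" "distinct (bs ! i)" if "i < length bs" for i
    using assms(2,3) that unfolding buffer_order_def by auto
  have disjoint: "set (bs ! i) \<inter> set (bs ! j) = {}"
    if "i < length bs" "j < length bs" "i \<noteq> j" for i j
    using assms(1,2) that classes unfolding presequencing_def by simp
  have "distinct bs"
    unfolding distinct_conv_nth
  proof (intro allI impI)
    fix i j assume "i < length bs" "j < length bs" "i \<noteq> j"
    moreover have "set (bs ! i) \<noteq> {}"
      using assms(1,2) \<open>i < length bs\<close> classes unfolding presequencing_def by simp
    ultimately show "bs ! i \<noteq> bs ! j" using disjoint by fastforce
  qed
  then show "distinct (concat bs)"
  proof (rule distinct_concat)
    show "distinct ys" if "ys \<in> set bs" for ys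
      using that classes by (auto simp: in_set_conv_nth)
    show "set ys \<inter> set zs = {}" if "ys \<in> set bs" "zs \<in> set bs" "ys \<noteq> zs" for ys zs
      using that disjoint by (auto simp: in_set_conv_nth)
  qed
  have "set (concat bs) = (\<Union>i<length bs. set (bs ! i))"
    unfolding set_concat by (auto simp: set_conv_nth[of bs])
  with assms(1,2) classes show "set (concat bs) = X"
    unfolding presequencing_def by simp
qed

lemma concat_buffer_orders_windows_independent:
  assumes "presequencing l X B P" "nondeficient_presequencing l P" "independent X B {}"
    and "length bs = length P" "\<And>i. i < length P \<Longrightarrow> buffer_order l (P ! i) (bs ! i)"
  shows "independent X B (set (take l (drop p (concat bs @ concat bs))))"
proof (rule window_of_cyclic_concat[where Q = "independent X B" and l = l,
      OF independent_subset \<open>independent X B {}\<close>])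
  have "l - 1 \<le> length (bs ! i) \<and> independent X B (set (bs ! i))" if "i < length bs" for i
  proof -
    have "distinct (bs ! i)" "set (bs ! i) = fst (P ! i)"
      using assms(4,5) that unfolding buffer_order_def by auto
    then have "length (bs ! i) = card (fst (P ! i))" by (metis distinct_card)
    with \<open>set (bs ! i) = fst (P ! i)\<close> show ?thesis
      using assms(1,2,4) that
      unfolding presequencing_def nondeficient_presequencing_def deficient_def by auto
  qed
  then show "\<forall>b\<in>set bs. l - 1 \<le> length b \<and> independent X B (set b)"
    by (auto simp: in_set_conv_nth)
  show "\<forall>i<length bs. independent X B (set (drop (length (bs ! i) - (l - 1)) (bs ! i)) \<union>
      set (take (l - 1) (bs ! ((i + 1) mod length bs))))"
    using assms unfolding presequencing_def buffer_order_def by auto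
qed

theorem lemma5:
  fixes n k t lam l :: nat and X :: "'a set" and B :: "'a set multiset"
    and P :: "('a set \<times> 'a set \<times> 'a set) list"
  assumes "partial_system n k t lam X B"
    and "0 < l"
    and "presequencing l X B P"
    and "nondeficient_presequencing l P"
  shows "\<exists>\<phi>. sequencing n X \<phi> \<and> cyclically_good l n X B \<phi>"
proof -
  have "finite X" "card X = n" using assms(1) by (auto simp: partial_system_def)
  \<comment> \<open>Blocks have \<open>k > t \<ge> 2\<close> elements, so none is empty.\<close>
  have "independent X B {}"
    using assms(1) unfolding partial_system_def independent_def by force
  obtain bs where orders: "length bs = length P"
    "\<And>i. i < length P \<Longrightarrow> buffer_order l (P ! i) (bs ! i)"
    using presequencing_buffer_orders assms(3,4) \<open>finite X\<close> by blast
  define xs where "xs = concat bs"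
  have "distinct xs" "set xs = X"
    using concat_buffer_orders_enumerate[OF assms(3) orders] by (simp_all add: xs_def)
  then have "length xs = n" using \<open>card X = n\<close> by (metis distinct_card)
  have "independent X B (set (take l (drop i (xs @ xs))))" for i
    unfolding xs_def
    by (rule concat_buffer_orders_windows_independent[OF assms(3,4) \<open>independent X B {}\<close> orders])
  then have "cyclically_good l n X B ((!) xs)"
    using cyclically_good_nth \<open>distinct xs\<close> \<open>set xs = X\<close> \<open>length xs = n\<close> by blast
  moreover have "sequencing n X ((!) xs)"
    using sequencing_nth \<open>distinct xs\<close> \<open>set xs = X\<close> \<open>length xs = n\<close> by blast
  ultimately show ?thesis by blast
qed

end
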